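(* Let $V$ be a real Banach space and $X\subseteq V$ a convex subspace. Then $X$ has the homotopy fixed point property if and only if $X$ is a singleton.
   Context: A topological space $X$ has the homotopy fixed point property if for every continuous map $f\colon I\times X\to X$, where $I=[0,1]$, there exists a continuous map $p\colon I\to X$ with $f(t,p(t))=p(t)$ for all $t\in I$. *)

theory Defs
  imports "HOL-Analysis.Analysis"
begin

definition homotopy_fixed_point_property :: "'a topology \<Rightarrow> bool" where
  "homotopy_fixed_point_property T \<longleftrightarrow>
     (\<forall>f :: real \<times> 'a \<Rightarrow> 'a.
        continuous_map (prod_topology (top_of_set {0..1}) T) T f \<longrightarrow>
        (\<exists>p :: real \<Rightarrow> 'a. continuous_map (top_of_set {0..1}) T p \<and>
              (\<forall>t\<in>{0..1}. f (t, p t) = p t)))"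

end

theory Submission
  imports Defs
begin

text \<open>The property passes from a space to each of its retracts, so it suffices to see that the
  unit interval fails it. Two distinct points \<open>a, b\<close> of the convex set \<open>X\<close> make the
  unit interval a retract of \<open>X\<close>: the segment from \<open>a\<close> to \<open>b\<close> is a section, and
  \<open>x \<mapsto> d(x,a) / (d(x,a) + d(x,b))\<close> retracts onto it. On the unit interval, the homotopy
  \<open>(t, l) \<mapsto> l + t - 1/2\<close> clamped to \<open>[0,1]\<close> has the fixed point \<open>0\<close> alone for
  \<open>t < 1/2\<close> and \<open>1\<close> alone for \<open>t > 1/2\<close>, so no continuous path of fixed points exists.\<close>

lemma homotopy_fixed_point_property_retraction_map:
  assumes hfpp: "homotopy_fixed_point_property X" and "retraction_map X Y r"
  shows "homotopy_fixed_point_property Y"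
  unfolding homotopy_fixed_point_property_def
proof (intro allI impI)
  obtain s where r: "continuous_map X Y r" and s: "continuous_map Y X s"
    and rs: "\<And>y. y \<in> topspace Y \<Longrightarrow> r (s y) = y"
    using \<open>retraction_map X Y r\<close> by (auto simp: retraction_map_def retraction_maps_def)
  fix f :: "real \<times> 'b \<Rightarrow> 'b"
  assume f: "continuous_map (prod_topology (top_of_set {0..1}) Y) Y f"
  have "continuous_map (prod_topology (top_of_set {0..1}) X) (prod_topology (top_of_set {0..1}) Y)
      (\<lambda>(t, x). (t, r x))"
    using continuous_map_compose[OF continuous_map_snd r]
    by (simp add: case_prod_unfold continuous_map_paired continuous_map_fst o_def)
  then have cont: "continuous_map (prod_topology (top_of_set {0..1}) X) X
      (s \<circ> f \<circ> (\<lambda>(t, x). (t, r x)))"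
    using f s by (intro continuous_map_compose)
  obtain p where p: "continuous_map (top_of_set {0..1}) X p"
    and p_fix: "\<forall>t\<in>{0..1}. s (f (t, r (p t))) = p t"
    using hfpp[unfolded homotopy_fixed_point_property_def, rule_format, OF cont] by auto
  have "f (t, r (p t)) = r (p t)" if "t \<in> {0..1}" for t
  proof -
    have "f (t, r (p t)) \<in> topspace Y"
      using f p r that by (force simp: continuous_map_def)
    then show ?thesis
      using rs p_fix that by metis
  qed
  moreover have "continuous_map (top_of_set {0..1}) Y (r \<circ> p)"
    using p r by (rule continuous_map_compose)
  ultimately show "\<exists>q. continuous_map (top_of_set {0..1}) Y q \<and> (\<forall>t\<in>{0..1}. f (t, q t) = q t)"
    by (metis comp_apply)
qed

lemma homotopy_fixed_point_property_imp_nonempty: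
  assumes "homotopy_fixed_point_property X"
  shows "topspace X \<noteq> {}"
proof -
  obtain p :: "real \<Rightarrow> 'a" where "continuous_map (top_of_set {0..1}) X p"
    using assms continuous_map_snd unfolding homotopy_fixed_point_property_def by blast
  then have "p 0 \<in> topspace X"
    by (auto simp: continuous_map_def)
  then show ?thesis
    by blast
qed

lemma homotopy_fixed_point_property_singleton:
  assumes "topspace X = {a}"
  shows "homotopy_fixed_point_property X"
  unfolding homotopy_fixed_point_property_def
proof (intro allI impI)
  fix f :: "real \<times> 'a \<Rightarrow> 'a"
  assume "continuous_map (prod_topology (top_of_set {0..1}) X) X f"
  then have "f (t, a) = a" if "t \<in> {0..1}" for t
    using assms that continuous_map_image_subset_topspace by fastforce
  then show "\<exists>p. continuous_map (top_of_set {0..1}) X p \<and> (\<forall>t\<in>{0..1}. f (t, p t) = p t)"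
    using assms by (intro exI[of _ "\<lambda>_. a"]) auto
qed

lemma not_homotopy_fixed_point_property_unit_interval:
  "\<not> homotopy_fixed_point_property (top_of_set {0..1::real})"
proof
  define f where "f = (\<lambda>(t, l). max 0 (min 1 (l + t - 1/2)) :: real)"
  assume hfpp: "homotopy_fixed_point_property (top_of_set {0..1::real})"
  have "continuous_on ({0..1} \<times> {0..1}) f"
    unfolding f_def case_prod_unfold by (intro continuous_intros)
  then have "continuous_map (prod_topology (top_of_set {0..1}) (top_of_set {0..1}))
      (top_of_set {0..1}) f"
    by (auto simp: prod_topology_subtopology_eu continuous_map_subtopology_eu f_def)
  then obtain p where "continuous_map (top_of_set {0..1}) (top_of_set {0..1}) p"
    and p_fix: "\<forall>t\<in>{0..1}. f (t, p t) = p t"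
    using hfpp[unfolded homotopy_fixed_point_property_def, rule_format] by blast
  then have p: "continuous_on {0..1} p" and p01: "p \<in> {0..1} \<rightarrow> {0..1}"
    by (simp_all add: continuous_map_subtopology_eu)
  have p_lower: "p t = 0" if "t \<in> {0..<1/2}" for t
  proof -
    have "max 0 (min 1 (p t + t - 1/2)) = p t" "p t \<le> 1"
      using p_fix p01 that by (auto simp: f_def)
    then show ?thesis
      using that by (auto simp: max_def min_def split: if_splits)
  qed
  have p_upper: "p t = 1" if "t \<in> {1/2<..1}" for t
  proof -
    have "max 0 (min 1 (p t + t - 1/2)) = p t" "0 \<le> p t"
      using p_fix p01 that by (auto simp: f_def)
    then show ?thesis
      using that by (auto simp: max_def min_def split: if_splits)
  qed
  have "p (1/2) = 0"
    by (rule continuous_constant_on_closure[of "{0..<1/2}"])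
      (auto simp: closure_atLeastLessThan p_lower intro: continuous_on_subset[OF p])
  moreover have "p (1/2) = 1"
    by (rule continuous_constant_on_closure[of "{1/2<..1}"])
      (auto simp: closure_greaterThanAtMost p_upper intro: continuous_on_subset[OF p])
  ultimately show False
    by simp
qed

lemma retraction_map_convex_unit_interval:
  fixes X :: "'a::real_normed_vector set"
  assumes "convex X" "a \<in> X" "b \<in> X" "a \<noteq> b"
  shows "retraction_map (top_of_set X) (top_of_set {0..1})
    (\<lambda>x. dist x a / (dist x a + dist x b))"
proof -
  define r where "r x = dist x a / (dist x a + dist x b)" for x
  define s where "s l = (1 - l) *\<^sub>R a + l *\<^sub>R b" for l :: real
  have denom_pos: "dist x a + dist x b > 0" for x
    using \<open>a \<noteq> b\<close> by (metis add_nonneg_pos add_pos_nonneg dist_nz zero_le_dist)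
  have "continuous_on X r"
    unfolding r_def using denom_pos by (intro continuous_intros) (auto simp: less_le)
  moreover have "r x \<in> {0..1}" for x
    using denom_pos[of x] by (auto simp: r_def divide_simps)
  moreover have "continuous_on {0..1} s"
    unfolding s_def by (intro continuous_intros)
  moreover have "s l \<in> X" if "l \<in> {0..1}" for l
    using assms that unfolding s_def by (auto intro: convexD)
  moreover have "r (s l) = l" if "l \<in> {0..1}" for l
  proof -
    have "s l - a = l *\<^sub>R (b - a)" "s l - b = (1 - l) *\<^sub>R (a - b)"
      by (simp_all add: s_def algebra_simps)
    then have "dist (s l) a = l * norm (b - a)" "dist (s l) b = (1 - l) * norm (b - a)"
      using that by (simp_all add: dist_norm norm_minus_commute[of a b])
    then show ?thesis
      using \<open>a \<noteq> b\<close> by (simp add: r_def field_simps)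
  qed
  ultimately show ?thesis
    unfolding retraction_map_def retraction_maps_def continuous_map_subtopology_eu r_def[symmetric]
    by (intro exI[of _ s]) auto
qed

theorem theorem4p5:
  fixes X :: "'a::banach set"
  assumes "convex X"
  shows "homotopy_fixed_point_property (top_of_set X) \<longleftrightarrow> (\<exists>x. X = {x})"
proof
  assume hfpp: "homotopy_fixed_point_property (top_of_set X)"
  obtain a where "a \<in> X"
    using homotopy_fixed_point_property_imp_nonempty[OF hfpp] by auto
  moreover have "b = a" if "b \<in> X" for b
  proof (rule ccontr)
    assume "b \<noteq> a"
    then have "retraction_map (top_of_set X) (top_of_set {0..1::real})
        (\<lambda>x. dist x b / (dist x b + dist x a))"
      by (rule retraction_map_convex_unit_interval[OF assms \<open>b \<in> X\<close> \<open>a \<in> X\<close>])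
    then have "homotopy_fixed_point_property (top_of_set {0..1::real})"
      by (rule homotopy_fixed_point_property_retraction_map[OF hfpp])
    then show False
      using not_homotopy_fixed_point_property_unit_interval by blast
  qed
  ultimately show "\<exists>x. X = {x}"
    by blast
next
  assume "\<exists>x. X = {x}"
  then obtain x where "X = {x}" ..
  then show "homotopy_fixed_point_property (top_of_set X)"
    by (intro homotopy_fixed_point_property_singleton[of _ x]) simp
qed

end
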